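(* Let $k>0$ and let $f:\mathbb{R}^d\to\mathbb{R}$ be a scalar-valued neural network in $\mathcal{A}_k^{\infty}$, i.e. $f = l_{W_n,b_n}\circ \mathrm{ReLU}\circ l_{W_{n-1},b_{n-1}}\circ \cdots \circ \mathrm{ReLU}\circ l_{W_1,b_1}$ with $n\ge 2$ and $\prod_{i=1}^n \|W_i\|_\infty \le k$. Let $W_0\in\mathbb{R}^{d\times 1}$ and $b_0\in\mathbb{R}^d$ with $\|W_0\|_\infty = 1$, and define $h_{W_0,b_0}:\mathbb{R}\to\mathbb{R}$ by $h_{W_0,b_0} = f\circ l_{W_0,b_0}$. Then for any such choice of $W_0$ and $b_0$, $$I(h_{W_0,b_0}') \le 2k.$$
   Context: For a matrix $W$ and vector $b$, $l_{W,b}(x)=Wx+b$. $\mathrm{ReLU}$ is applied elementwise, $\mathrm{ReLU}(x)=\max(x,0)$. For a matrix $W$, $\|W\|_\infty=\sup_{x\ne 0}\|Wx\|_\infty/\|x\|_\infty$, which equals the maximum over rows of $W$ of the $\ell_1$ norm of the row. Derivatives are taken where they exist (the functions involved are piecewise linear), and $g(\pm\infty)$ denotes $\lim_{t\to\pm\infty} g(t)$. For $g:\mathbb{R}\to\mathbb{R}$, the total variation over $\mathbb{R}$ is $V_{-\infty}^{\infty}(g)=\sup_T\sum_{t_i\in T}|g(t_i)-g(t_{i-1})|$ over all finite partitions $T$, and the intrinsic variability of $g$ is $I(g)=V_{-\infty}^{\infty}(g)+|g(\infty)|+|g(-\infty)|$. *)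

theory Defs
  imports "HOL-Analysis.Analysis"
begin

text \<open>Vectors in R^m are represented as functions nat => real, only indices < m matter.
  A matrix with rows r and cols c is a function nat => nat => real (entry W i j).\<close>

definition relu :: "real \<Rightarrow> real" where
  "relu x = max x 0"

definition affine :: "nat \<Rightarrow> (nat \<Rightarrow> nat \<Rightarrow> real) \<Rightarrow> (nat \<Rightarrow> real) \<Rightarrow> (nat \<Rightarrow> real) \<Rightarrow> (nat \<Rightarrow> real)" where
  "affine cols W b x = (\<lambda>i. (\<Sum>j<cols. W i j * x j) + b i)"

definition mat_norm_inf :: "nat \<Rightarrow> nat \<Rightarrow> (nat \<Rightarrow> nat \<Rightarrow> real) \<Rightarrow> real" where
  "mat_norm_inf nr nc W = Max (insert 0 {(\<Sum>j<nc. \<bar>W i j\<bar>) | i. i < nr})"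

text \<open>Network with layer widths dims 0 (= input dim), ..., dims n;
  layer i (1 \<le> i \<le> n) has weight W i (dims i x dims (i-1)) and bias b i.
  net_layers dims W b j x = output of the j-th affine map (pre-activation).\<close>
fun net_layers :: "(nat \<Rightarrow> nat) \<Rightarrow> (nat \<Rightarrow> nat \<Rightarrow> nat \<Rightarrow> real) \<Rightarrow> (nat \<Rightarrow> nat \<Rightarrow> real)
    \<Rightarrow> nat \<Rightarrow> (nat \<Rightarrow> real) \<Rightarrow> (nat \<Rightarrow> real)" where
  "net_layers dims W b 0 x = x"
| "net_layers dims W b (Suc j) x =
     (if j = 0 then affine (dims 0) (W 1) (b 1) x
      else affine (dims j) (W (Suc j)) (b (Suc j)) (relu \<circ> net_layers dims W b j x))"

definition net :: "(nat \<Rightarrow> nat) \<Rightarrow> (nat \<Rightarrow> nat \<Rightarrow> nat \<Rightarrow> real) \<Rightarrow> (nat \<Rightarrow> nat \<Rightarrow> real)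
    \<Rightarrow> nat \<Rightarrow> (nat \<Rightarrow> real) \<Rightarrow> real" where
  "net dims W b n x = net_layers dims W b n x 0"

text \<open>Total variation over R of g, restricted to the set D where g is defined
  (here: the points where the derivative exists), as an extended real.\<close>
definition total_variation_on :: "real set \<Rightarrow> (real \<Rightarrow> real) \<Rightarrow> ereal" where
  "total_variation_on D g =
     (SUP ts \<in> {ts. sorted_wrt (<) ts \<and> set ts \<subseteq> D}.
        ereal (\<Sum>i<length ts - 1. \<bar>g (ts ! Suc i) - g (ts ! i)\<bar>))"

definition intrinsic_var_deriv :: "(real \<Rightarrow> real) \<Rightarrow> ereal" where
  "intrinsic_var_deriv h =
     total_variation_on {t. h differentiable (at t)} (deriv h)
     + ereal \<bar>Lim at_top (deriv h)\<bar> + ereal \<bar>Lim at_bot (deriv h)\<bar>"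

end

theory Submission
  imports Defs
begin

text \<open>
  Discretize the statement: for points \<open>t\<^sub>0 < \<dots> < t\<^sub>m\<close> let \<open>s\<^sub>i\<close> be the slopes of \<open>h\<close> between
  consecutive points and measure \<open>|s\<^sub>1| + \<Sum>|s\<^sub>i\<^sub>+\<^sub>1 - s\<^sub>i| + |s\<^sub>m|\<close>. A uniform bound \<open>C\<close> on this
  quantity is \<open>2|\<alpha>|\<close> for an affine map \<open>\<alpha>t + \<beta>\<close>, gets multiplied by \<open>\<Sum>|w\<^sub>c|\<close> under a linear
  combination \<open>\<Sum>w\<^sub>c g\<^sub>c + d\<close> (triangle inequality), and survives ReLU: refining a partition can only
  increase the quantity, since the slope over \<open>[a, b]\<close> is a convex combination of the slopes over
  \<open>[a, z]\<close> and \<open>[z, b]\<close>; after inserting the zeros of \<open>g\<close> given by the intermediate value theorem,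
  ReLU just replaces the slopes on stretches where \<open>g \<le> 0\<close> by 0, which does not increase it.
  Along the line \<open>t \<mapsto> w\<^sub>0t + b\<^sub>0\<close> every neuron therefore admits the bound \<open>2\<close> times the product
  of the norms of the layers so far. The network is affine near \<open>\<plusminus>\<infinity>\<close>, so the limits of \<open>h'\<close> at \<open>\<plusminus>\<infinity>\<close> are slopes
  over far away intervals, and \<open>h'\<close> at the points of a partition is the limit of slopes over
  short intervals; this turns the discrete bound into \<open>I(h') \<le> 2k\<close>.
\<close>

definition slope :: "(real \<Rightarrow> real) \<Rightarrow> real \<Rightarrow> real \<Rightarrow> real" where
  "slope g a b = (g b - g a) / (b - a)"

fun slope_var :: "(real \<Rightarrow> real) \<Rightarrow> real \<Rightarrow> real list \<Rightarrow> real" where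
  "slope_var g p (a # b # ts) = \<bar>slope g a b - p\<bar> + slope_var g (slope g a b) (b # ts)"
| "slope_var g p [] = \<bar>p\<bar>"
| "slope_var g p [a] = \<bar>p\<bar>"

definition slope_var_bounded :: "(real \<Rightarrow> real) \<Rightarrow> real \<Rightarrow> bool" where
  "slope_var_bounded g C \<longleftrightarrow> (\<forall>ts. sorted_wrt (<) ts \<longrightarrow> slope_var g 0 ts \<le> C)"

lemma slope_var_bounded_nonneg: "slope_var_bounded g C \<Longrightarrow> 0 \<le> C"
  unfolding slope_var_bounded_def by (metis slope_var.simps(2) abs_zero sorted_wrt.simps(1))

lemma slope_var_bounded_mono: "slope_var_bounded g C \<Longrightarrow> C \<le> D \<Longrightarrow> slope_var_bounded g D"
  unfolding slope_var_bounded_def by force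

lemma slope_var_change_start: "slope_var g p ts \<le> \<bar>p - p'\<bar> + slope_var g p' ts"
  by (cases "(g, p, ts)" rule: slope_var.cases) auto

lemma slope_var_refine:
  assumes "a < z" "z < b"
  shows "slope_var g p (a # b # ts) \<le> slope_var g p (a # z # b # ts)"
proof -
  define s s\<^sub>1 s\<^sub>2 where "s = slope g a b" and "s\<^sub>1 = slope g a z" and "s\<^sub>2 = slope g z b"
  define l where "l = (z - a) / (b - a)"
  have l: "0 \<le> l" "l \<le> 1" using assms by (auto simp: l_def field_simps)
  have "(b - a) * s = (z - a) * s\<^sub>1 + (b - z) * s\<^sub>2"
    using assms by (simp add: s_def s\<^sub>1_def s\<^sub>2_def slope_def)
  moreover have "(b - a) * l = z - a" using assms by (simp add: l_def)
  then have "(b - a) * (1 - l) = b - z" by (simp add: right_diff_distrib)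
  with \<open>(b - a) * l = z - a\<close> have "(b - a) * (l * s\<^sub>1 + (1 - l) * s\<^sub>2) = (z - a) * s\<^sub>1 + (b - z) * s\<^sub>2"
    by (metis distrib_left mult.assoc)
  ultimately have "(b - a) * s = (b - a) * (l * s\<^sub>1 + (1 - l) * s\<^sub>2)" by simp
  then have convex: "s = l * s\<^sub>1 + (1 - l) * s\<^sub>2" using assms by simp
  have "\<bar>s - p\<bar> \<le> \<bar>s\<^sub>1 - p\<bar> + \<bar>(1 - l) * (s\<^sub>2 - s\<^sub>1)\<bar>"
    using abs_triangle_ineq[of "s\<^sub>1 - p" "(1 - l) * (s\<^sub>2 - s\<^sub>1)"] convex by (simp add: algebra_simps)
  then have first: "\<bar>s - p\<bar> \<le> \<bar>s\<^sub>1 - p\<bar> + (1 - l) * \<bar>s\<^sub>2 - s\<^sub>1\<bar>"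
    using l by (simp add: abs_mult)
  have "\<bar>s - s\<^sub>2\<bar> = \<bar>l * (s\<^sub>1 - s\<^sub>2)\<bar>" using convex by (simp add: algebra_simps)
  then have second: "\<bar>s - s\<^sub>2\<bar> = l * \<bar>s\<^sub>2 - s\<^sub>1\<bar>" using l by (simp add: abs_mult abs_minus_commute)
  have "slope_var g p (a # b # ts) = \<bar>s - p\<bar> + slope_var g s (b # ts)" by (simp add: s_def)
  also have "\<dots> \<le> \<bar>s - p\<bar> + \<bar>s - s\<^sub>2\<bar> + slope_var g s\<^sub>2 (b # ts)"
    using slope_var_change_start[of g s "b # ts" s\<^sub>2] by simp
  also have "\<dots> \<le> \<bar>s\<^sub>1 - p\<bar> + \<bar>s\<^sub>2 - s\<^sub>1\<bar> + slope_var g s\<^sub>2 (b # ts)"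
    using first second by (simp add: algebra_simps)
  also have "\<dots> = slope_var g p (a # z # b # ts)" by (simp add: s\<^sub>1_def s\<^sub>2_def)
  finally show ?thesis .
qed

fun sign_stable :: "(real \<Rightarrow> real) \<Rightarrow> real list \<Rightarrow> bool" where
  "sign_stable g (a # b # ts) \<longleftrightarrow>
     ((0 \<le> g a \<and> 0 \<le> g b) \<or> (g a \<le> 0 \<and> g b \<le> 0)) \<and> sign_stable g (b # ts)"
| "sign_stable g _ \<longleftrightarrow> True"

lemma sign_stable_refinement:
  assumes "continuous_on UNIV g" "sorted_wrt (<) ts"
  shows "\<exists>ts'. sorted_wrt (<) ts' \<and> sign_stable g ts' \<and> hd ts' = hd ts \<and>
           (ts' = [] \<longleftrightarrow> ts = []) \<and> slope_var f p ts \<le> slope_var f p ts'"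
  using assms(2)
proof (induction ts arbitrary: p rule: induct_list012)
  case 1
  show ?case by (intro exI[of _ "[]"]) simp
next
  case (2 x)
  show ?case by (intro exI[of _ "[x]"]) simp
next
  case (3 x y zs)
  then have xy: "x < y" and "sorted_wrt (<) (y # zs)" by auto
  then obtain r' where r': "sorted_wrt (<) r'" "sign_stable g r'" "hd r' = y" "r' \<noteq> []"
     "slope_var f (slope f x y) (y # zs) \<le> slope_var f (slope f x y) r'"
    using "3.IH"(2)[of "slope f x y"] by auto
  then obtain r where r: "r' = y # r" by (cases r') auto
  have le: "slope_var f p (x # y # zs) \<le> slope_var f p (x # y # r)" using r'(5) r by simp
  show ?case
  proof (cases "(0 \<le> g x \<and> 0 \<le> g y) \<or> (g x \<le> 0 \<and> g y \<le> 0)")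
    case True
    then show ?thesis using r' r xy le by (intro exI[of _ "x # y # r"]) auto
  next
    case sign_change: False
    have "\<exists>z. x \<le> z \<and> z \<le> y \<and> g z = 0"
    proof (cases "g x < 0")
      case True
      then show ?thesis
        using sign_change IVT'[of g x 0 y] xy continuous_on_subset[OF assms(1)] by force
    next
      case False
      then show ?thesis
        using sign_change IVT2'[of g y 0 x] xy continuous_on_subset[OF assms(1)] by force
    qed
    then obtain z where "x \<le> z" "z \<le> y" "g z = 0" by blast
    with sign_change have z: "x < z" "z < y" "g z = 0" by (auto simp: order.order_iff_strict)
    have "slope_var f p (x # y # r) \<le> slope_var f p (x # z # y # r)"
      by (rule slope_var_refine[OF z(1,2)])
    then show ?thesis using r' r z le by (intro exI[of _ "x # z # y # r"]) auto
  qed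
qed

text \<open>The two statements are proved together: the first covers partitions starting where
  \<open>g \<ge> 0\<close>, the second those starting where \<open>g \<le> 0\<close>, with the incoming slope \<open>p\<close> kept for \<open>g\<close>
  but reset to 0 for ReLU.\<close>

lemma slope_var_relu_sign_stable:
  assumes "sorted_wrt (<) ts" "sign_stable g ts" "ts \<noteq> []"
  shows "(0 \<le> g (hd ts) \<longrightarrow> (g (hd ts) = 0 \<longrightarrow> p \<le> 0) \<longrightarrow>
            slope_var (\<lambda>t. relu (g t)) p ts \<le> slope_var g p ts) \<and>
         (g (hd ts) \<le> 0 \<longrightarrow> (g (hd ts) = 0 \<longrightarrow> 0 \<le> p) \<longrightarrow>
            slope_var (\<lambda>t. relu (g t)) 0 ts \<le> slope_var g p ts + p)"
  using assms
proof (induction ts arbitrary: p rule: induct_list012)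
  case (2 x)
  then show ?case by (auto simp: abs_if)
next
  case (3 a b zs)
  let ?u = "\<lambda>t. relu (g t)"
  define s where "s = slope g a b"
  have ab: "a < b" using "3.prems" by simp
  have IH: "(0 \<le> g b \<longrightarrow> (g b = 0 \<longrightarrow> q \<le> 0) \<longrightarrow> slope_var ?u q (b # zs) \<le> slope_var g q (b # zs)) \<and>
      (g b \<le> 0 \<longrightarrow> (g b = 0 \<longrightarrow> 0 \<le> q) \<longrightarrow> slope_var ?u 0 (b # zs) \<le> slope_var g q (b # zs) + q)" for q
    using "3.IH"(2)[of q] "3.prems" by simp
  have g_step: "slope_var g q (a # b # zs) = \<bar>s - q\<bar> + slope_var g s (b # zs)" for q
    by (simp add: s_def)
  show ?case
  proof (cases "0 \<le> g a \<and> 0 \<le> g b")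
    case True
    then have "slope ?u a b = s" by (simp add: relu_def s_def slope_def)
    then have u_step: "slope_var ?u q (a # b # zs) = \<bar>s - q\<bar> + slope_var ?u s (b # zs)" for q
      by simp
    have "g b = 0 \<Longrightarrow> s \<le> 0" using True ab by (simp add: s_def slope_def divide_nonpos_pos)
    then have rest: "slope_var ?u s (b # zs) \<le> slope_var g s (b # zs)" using IH[of s] True by auto
    show ?thesis
    proof (intro conjI impI)
      show "slope_var ?u p (a # b # zs) \<le> slope_var g p (a # b # zs)"
        using rest unfolding u_step g_step by simp
    next
      assume "g (hd (a # b # zs)) \<le> 0"
      with True ab have "0 \<le> s" by (simp add: s_def slope_def)
      then have "\<bar>s\<bar> \<le> \<bar>s - p\<bar> + p" by linarith
      then show "slope_var ?u 0 (a # b # zs) \<le> slope_var g p (a # b # zs) + p"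
        using rest unfolding u_step g_step by simp
    qed
  next
    case False
    then have neg: "g a \<le> 0" "g b \<le> 0" using "3.prems" by auto
    then have "slope ?u a b = 0" by (simp add: relu_def slope_def)
    then have u_step: "slope_var ?u q (a # b # zs) = \<bar>q\<bar> + slope_var ?u 0 (b # zs)" for q
      by simp
    have "g b = 0 \<Longrightarrow> 0 \<le> s" using neg ab by (simp add: s_def slope_def divide_nonpos_pos)
    then have rest: "slope_var ?u 0 (b # zs) \<le> slope_var g s (b # zs) + s" using IH[of s] neg by auto
    have "s - p \<le> \<bar>s - p\<bar>" by simp
    show ?thesis
    proof (intro conjI impI)
      assume "0 \<le> g (hd (a # b # zs))" "g (hd (a # b # zs)) = 0 \<longrightarrow> p \<le> 0"
      with neg ab have "s \<le> 0" "p \<le> 0" by (auto simp: s_def slope_def divide_nonpos_pos)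
      then show "slope_var ?u p (a # b # zs) \<le> slope_var g p (a # b # zs)"
        using rest \<open>s - p \<le> \<bar>s - p\<bar>\<close> unfolding u_step g_step by simp
    next
      show "slope_var ?u 0 (a # b # zs) \<le> slope_var g p (a # b # zs) + p"
        using rest \<open>s - p \<le> \<bar>s - p\<bar>\<close> unfolding u_step g_step by simp
    qed
  qed
qed simp

lemma slope_var_bounded_relu:
  assumes "continuous_on UNIV g" "slope_var_bounded g C"
  shows "slope_var_bounded (\<lambda>t. relu (g t)) C"
  unfolding slope_var_bounded_def
proof (intro allI impI)
  fix ts :: "real list"
  assume ts: "sorted_wrt (<) ts"
  let ?u = "\<lambda>t. relu (g t)"
  show "slope_var ?u 0 ts \<le> C"
  proof (cases "ts = []")
    case True
    then show ?thesis using slope_var_bounded_nonneg[OF assms(2)] by simp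
  next
    case False
    then obtain r where r: "sorted_wrt (<) r" "sign_stable g r" "r \<noteq> []"
        "slope_var ?u 0 ts \<le> slope_var ?u 0 r"
      using sign_stable_refinement[OF assms(1) ts, of ?u 0] by auto
    have "slope_var ?u 0 r \<le> slope_var g 0 r"
      using slope_var_relu_sign_stable[OF r(1-3), of 0] by (cases "0 \<le> g (hd r)") auto
    also have "\<dots> \<le> C" using assms(2) r(1) unfolding slope_var_bounded_def by blast
    finally show ?thesis using r(4) by linarith
  qed
qed

lemma slope_lincomb:
  "slope (\<lambda>t. (\<Sum>c<m. w c * g c t) + d) a b = (\<Sum>c<m. w c * slope (g c) a b)" for m :: nat
  unfolding slope_def
  by (simp add: sum_subtractf[symmetric] right_diff_distrib[symmetric] sum_divide_distrib)

lemma slope_var_lincomb: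
  "slope_var (\<lambda>t. (\<Sum>c<m. w c * g c t) + d) (\<Sum>c<m. w c * p c) ts
     \<le> (\<Sum>c<m. \<bar>w c\<bar> * slope_var (g c) (p c) ts)" for m :: nat
proof (induction ts arbitrary: p rule: induct_list012)
  case (3 x y zs)
  define s where "s c = slope (g c) x y" for c
  have "\<bar>(\<Sum>c<m. w c * s c) - (\<Sum>c<m. w c * p c)\<bar> = \<bar>\<Sum>c<m. w c * (s c - p c)\<bar>"
    by (simp add: sum_subtractf right_diff_distrib)
  also have "\<dots> \<le> (\<Sum>c<m. \<bar>w c\<bar> * \<bar>s c - p c\<bar>)" by (rule sum_abs[THEN order_trans]) (simp add: abs_mult)
  finally have "\<bar>(\<Sum>c<m. w c * s c) - (\<Sum>c<m. w c * p c)\<bar> \<le> (\<Sum>c<m. \<bar>w c\<bar> * \<bar>s c - p c\<bar>)" .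
  with "3.IH"(2)[of s] show ?case
    by (simp add: slope_lincomb s_def[symmetric] sum.distrib distrib_left)
qed (simp_all add: abs_mult[symmetric] sum_abs)

lemma slope_var_bounded_lincomb:
  fixes m :: nat
  assumes "\<And>c. c < m \<Longrightarrow> slope_var_bounded (g c) C"
  shows "slope_var_bounded (\<lambda>t. (\<Sum>c<m. w c * g c t) + d) ((\<Sum>c<m. \<bar>w c\<bar>) * C)"
  unfolding slope_var_bounded_def
proof (intro allI impI)
  fix ts :: "real list"
  assume "sorted_wrt (<) ts"
  then have "(\<Sum>c<m. \<bar>w c\<bar> * slope_var (g c) 0 ts) \<le> (\<Sum>c<m. \<bar>w c\<bar> * C)"
    using assms by (intro sum_mono mult_left_mono) (auto simp: slope_var_bounded_def)
  then show "slope_var (\<lambda>t. (\<Sum>c<m. w c * g c t) + d) 0 ts \<le> (\<Sum>c<m. \<bar>w c\<bar>) * C"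
    using slope_var_lincomb[where m=m and w=w and g=g and d=d and p="\<lambda>_. 0" and ts=ts]
    by (simp add: sum_distrib_right)
qed

lemma slope_var_affine:
  "sorted_wrt (<) ts \<Longrightarrow> slope_var (\<lambda>t. \<alpha> * t + \<beta>) p ts \<le> \<bar>\<alpha> - p\<bar> + \<bar>\<alpha>\<bar>"
proof (induction ts arbitrary: p rule: induct_list012)
  case (3 x y zs)
  then have "slope (\<lambda>t. \<alpha> * t + \<beta>) x y = \<alpha>" by (simp add: slope_def right_diff_distrib[symmetric])
  then show ?case using "3.IH"(2)[of \<alpha>] "3.prems" by simp
qed (auto simp: abs_if)

lemma slope_var_bounded_affine: "slope_var_bounded (\<lambda>t. \<alpha> * t + \<beta>) (2 * \<bar>\<alpha>\<bar>)"
  unfolding slope_var_bounded_def using slope_var_affine[of _ \<alpha> \<beta> 0] by simp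

definition eventually_affine :: "real filter \<Rightarrow> (real \<Rightarrow> real) \<Rightarrow> bool" where
  "eventually_affine F g \<longleftrightarrow> (\<exists>a c. eventually (\<lambda>t. g t = a * t + c) F)"

lemma eventually_affine_lincomb:
  fixes m :: nat
  assumes "\<And>c. c < m \<Longrightarrow> eventually_affine F (g c)"
  shows "eventually_affine F (\<lambda>t. (\<Sum>c<m. w c * g c t) + d)"
proof -
  obtain a e where ae: "\<And>c. c < m \<Longrightarrow> eventually (\<lambda>t. g c t = a c * t + e c) F"
    using assms unfolding eventually_affine_def by metis
  have "eventually (\<lambda>t. \<forall>c\<in>{..<m}. g c t = a c * t + e c) F"
    by (rule eventually_ball_finite) (use ae in auto)
  then have "eventually (\<lambda>t. (\<Sum>c<m. w c * g c t) + d
      = (\<Sum>c<m. w c * a c) * t + ((\<Sum>c<m. w c * e c) + d)) F"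
    by (rule eventually_mono)
      (simp add: sum_distrib_right sum_distrib_left distrib_left sum.distrib algebra_simps)
  then show ?thesis unfolding eventually_affine_def by blast
qed

lemma affine_eventually_sign_at_top:
  fixes a c :: real
  assumes "a \<noteq> 0"
  shows "eventually (\<lambda>t. 0 < a * t + c) at_top \<or> eventually (\<lambda>t. a * t + c < 0) at_top"
proof (cases "0 < a")
  case True
  then have "eventually (\<lambda>t. 0 < a * t + c) at_top"
    by (intro eventually_mono[OF eventually_gt_at_top[of "- c / a"]]) (simp add: field_simps)
  then show ?thesis ..
next
  case False
  with assms have "a < 0" by simp
  then have "eventually (\<lambda>t. a * t + c < 0) at_top"
    by (intro eventually_mono[OF eventually_gt_at_top[of "- c / a"]]) (simp add: field_simps)
  then show ?thesis ..
qed

lemma affine_eventually_sign_at_bot: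
  fixes a c :: real
  assumes "a \<noteq> 0"
  shows "eventually (\<lambda>t. 0 < a * t + c) at_bot \<or> eventually (\<lambda>t. a * t + c < 0) at_bot"
  using affine_eventually_sign_at_top[of "- a" c] assms by (simp add: at_bot_mirror eventually_filtermap)

lemma eventually_affine_relu:
  assumes sign: "\<And>a c. a \<noteq> 0 \<Longrightarrow> eventually (\<lambda>t. 0 < a * t + c) F \<or> eventually (\<lambda>t. a * t + c < 0) F"
    and "eventually_affine F g"
  shows "eventually_affine F (\<lambda>t. relu (g t))"
proof -
  obtain a c where g: "eventually (\<lambda>t. g t = a * t + c) F"
    using assms(2) unfolding eventually_affine_def by blast
  consider "a = 0" | "eventually (\<lambda>t. 0 < a * t + c) F" | "eventually (\<lambda>t. a * t + c < 0) F"
    using sign by blast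
  then show ?thesis
  proof cases
    case 1
    from g have "eventually (\<lambda>t. relu (g t) = 0 * t + relu c) F" by eventually_elim (simp add: 1)
    then show ?thesis unfolding eventually_affine_def by blast
  next
    case 2
    with g have "eventually (\<lambda>t. relu (g t) = a * t + c) F" by eventually_elim (simp add: relu_def)
    then show ?thesis unfolding eventually_affine_def by blast
  next
    case 3
    with g have "eventually (\<lambda>t. relu (g t) = 0 * t + 0) F" by eventually_elim (simp add: relu_def)
    then show ?thesis unfolding eventually_affine_def by blast
  qed
qed

definition tame :: "(real \<Rightarrow> real) \<Rightarrow> real \<Rightarrow> bool" where
  "tame g C \<longleftrightarrow> continuous_on UNIV g \<and> eventually_affine at_top g \<and> eventually_affine at_bot g
     \<and> slope_var_bounded g C"

lemma tame_mono: "tame g C \<Longrightarrow> C \<le> D \<Longrightarrow> tame g D"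
  unfolding tame_def using slope_var_bounded_mono by blast

lemma tame_affine: "tame (\<lambda>t. \<alpha> * t + \<beta>) (2 * \<bar>\<alpha>\<bar>)"
proof -
  have "eventually_affine F (\<lambda>t. \<alpha> * t + \<beta>)" for F
    unfolding eventually_affine_def by (intro exI[of _ \<alpha>] exI[of _ \<beta>]) simp
  then show ?thesis
    unfolding tame_def by (auto intro!: continuous_intros slope_var_bounded_affine)
qed

lemma tame_lincomb:
  fixes m :: nat
  assumes "\<And>c. c < m \<Longrightarrow> tame (g c) C"
  shows "tame (\<lambda>t. (\<Sum>c<m. w c * g c t) + d) ((\<Sum>c<m. \<bar>w c\<bar>) * C)"
  using assms unfolding tame_def
  by (auto intro!: continuous_intros eventually_affine_lincomb slope_var_bounded_lincomb)

lemma tame_relu: "tame g C \<Longrightarrow> tame (\<lambda>t. relu (g t)) C"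
  unfolding tame_def relu_def[abs_def]
  by (auto intro!: continuous_intros slope_var_bounded_relu[unfolded relu_def[abs_def]]
      eventually_affine_relu[unfolded relu_def[abs_def]]
      affine_eventually_sign_at_top affine_eventually_sign_at_bot)

lemma row_sum_le_mat_norm_inf: "i < nr \<Longrightarrow> (\<Sum>j<nc. \<bar>W i j\<bar>) \<le> mat_norm_inf nr nc W"
proof -
  assume "i < nr"
  have "{(\<Sum>j<nc. \<bar>W i j\<bar>) | i. i < nr} = (\<lambda>i. \<Sum>j<nc. \<bar>W i j\<bar>) ` {..<nr}" by auto
  with \<open>i < nr\<close> show ?thesis unfolding mat_norm_inf_def by (intro Max_ge) auto
qed

lemma mat_norm_inf_nonneg: "0 \<le> mat_norm_inf nr nc W"
  unfolding mat_norm_inf_def by (rule Max_ge_iff[THEN iffD2]) auto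

lemma tame_net_layers:
  assumes w0: "\<And>c. c < dims 0 \<Longrightarrow> \<bar>w0 c\<bar> \<le> 1" and "1 \<le> j" "i < dims j"
  shows "tame (\<lambda>t. net_layers dims W b j (\<lambda>i. w0 i * t + b0 i) i)
           (2 * (\<Prod>l=1..j. mat_norm_inf (dims l) (dims (l - 1)) (W l)))"
  using assms(2,3)
proof (induction j arbitrary: i rule: nat_induct_at_least)
  case base
  have "tame (\<lambda>t. (\<Sum>c<dims 0. W 1 i c * (w0 c * t + b0 c)) + b 1 i) ((\<Sum>c<dims 0. \<bar>W 1 i c\<bar>) * 2)"
    by (rule tame_lincomb, rule tame_mono[OF tame_affine]) (use w0 in auto)
  moreover have "(\<Sum>c<dims 0. \<bar>W 1 i c\<bar>) * 2 \<le> 2 * mat_norm_inf (dims 1) (dims 0) (W 1)"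
    using row_sum_le_mat_norm_inf[OF base] by simp
  ultimately show ?case by (simp add: affine_def tame_mono)
next
  case (Suc j)
  let ?N = "\<lambda>l. mat_norm_inf (dims l) (dims (l - 1)) (W l)"
  let ?P = "\<Prod>l=1..j. ?N l"
  have "(\<Sum>c<dims j. \<bar>W (Suc j) i c\<bar>) * (2 * ?P) \<le> ?N (Suc j) * (2 * ?P)"
    using row_sum_le_mat_norm_inf[OF Suc.prems]
    by (intro mult_right_mono) (simp_all add: prod_nonneg mat_norm_inf_nonneg)
  also have "\<dots> = 2 * (\<Prod>l=1..Suc j. ?N l)"
    by (simp add: prod.nat_ivl_Suc')
  finally have bound: "(\<Sum>c<dims j. \<bar>W (Suc j) i c\<bar>) * (2 * ?P) \<le> 2 * (\<Prod>l=1..Suc j. ?N l)" .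
  let ?g = "\<lambda>c t. relu (net_layers dims W b j (\<lambda>i. w0 i * t + b0 i) c)"
  have "tame (?g c) (2 * ?P)" if "c < dims j" for c
    using Suc.IH[OF that] by (rule tame_relu)
  then have "tame (\<lambda>t. (\<Sum>c<dims j. W (Suc j) i c * ?g c t) + b (Suc j) i)
      ((\<Sum>c<dims j. \<bar>W (Suc j) i c\<bar>) * (2 * ?P))"
    by (rule tame_lincomb)
  then have "tame (\<lambda>t. (\<Sum>c<dims j. W (Suc j) i c * ?g c t) + b (Suc j) i) (2 * (\<Prod>l=1..Suc j. ?N l))"
    using bound by (rule tame_mono)
  then show ?case using Suc.hyps by (simp add: affine_def)
qed

fun list_variation :: "real list \<Rightarrow> real" where
  "list_variation (x # y # xs) = \<bar>y - x\<bar> + list_variation (y # xs)"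
| "list_variation _ = 0"

lemma sum_eq_list_variation:
  "(\<Sum>i<length ts - 1. \<bar>f (ts ! Suc i) - f (ts ! i)\<bar>) = list_variation (map f ts)"
proof (induction ts rule: induct_list012)
  case (3 x y zs)
  then show ?case by (simp del: sum.lessThan_Suc add: sum.lessThan_Suc_shift)
qed auto

lemma list_variation_Cons_ge: "list_variation xs \<le> list_variation (x # xs)"
  by (cases xs) auto

lemma tendsto_list_variation:
  "(\<And>t. t \<in> set ts \<Longrightarrow> ((\<lambda>d. f d t) \<longlongrightarrow> g t) F) \<Longrightarrow>
   ((\<lambda>d. list_variation (map (f d) ts)) \<longlongrightarrow> list_variation (map g ts)) F"
proof (induction ts rule: induct_list012)
  case (3 x y zs)
  have "((\<lambda>d. list_variation (map (f d) (y # zs))) \<longlongrightarrow> list_variation (map g (y # zs))) F"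
    using 3 by simp
  moreover have "((\<lambda>d. \<bar>f d y - f d x\<bar>) \<longlongrightarrow> \<bar>g y - g x\<bar>) F"
    by (intro tendsto_intros) (use 3 in auto)
  ultimately show ?case by (simp add: tendsto_add)
qed auto

fun shift_pairs :: "real \<Rightarrow> real list \<Rightarrow> real list" where
  "shift_pairs d [] = []"
| "shift_pairs d (t # ts) = t # (t + d) # shift_pairs d ts"

lemma set_shift_pairs: "set (shift_pairs d ts) = set ts \<union> (\<lambda>t. t + d) ` set ts"
  by (induction ts) auto

lemma sorted_shift_pairs:
  "0 < d \<Longrightarrow> sorted_wrt (\<lambda>x y. x + d < y) ts \<Longrightarrow> sorted_wrt (<) (shift_pairs d ts)"
  by (induction ts) (auto simp: set_shift_pairs)

lemma eventually_sorted_gap: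
  "sorted_wrt (<) ts \<Longrightarrow> eventually (\<lambda>d. sorted_wrt (\<lambda>x y. x + d < y) ts) (at_right 0)"
  for ts :: "real list"
proof (induction ts)
  case (Cons t ts)
  have "eventually (\<lambda>d. t + d < y) (at_right 0)" if "y \<in> set ts" for y
    using Cons.prems that unfolding eventually_at_right_field by (intro exI[of _ "y - t"]) auto
  then have "eventually (\<lambda>d. \<forall>y\<in>set ts. t + d < y) (at_right 0)"
    by (intro eventually_ball_finite) auto
  with Cons show ?case by (simp add: eventually_conj_iff)
qed simp

lemma list_variation_short_slopes_le:
  assumes "slope h R R' = a"
  shows "list_variation (p # map (\<lambda>t. slope h t (t + d)) ts) + \<bar>a\<bar>
           \<le> slope_var h p (q # shift_pairs d ts @ [R, R'])"
  using assms
proof (induction ts arbitrary: p q)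
  case (Cons t ts)
  define s e where "s = slope h q t" and "e = slope h t (t + d)"
  have "\<bar>e - p\<bar> \<le> \<bar>s - p\<bar> + \<bar>e - s\<bar>" by linarith
  then show ?case using Cons.IH[of e "t + d"] Cons.prems by (simp add: s_def e_def)
qed simp

lemma deriv_eq_affine_on_open:
  fixes h :: "real \<Rightarrow> real"
  assumes "open S" "t \<in> S" "\<And>x. x \<in> S \<Longrightarrow> h x = a * x + c"
  shows "deriv h t = a"
proof -
  have "((\<lambda>x. a * x + c) has_real_derivative a) (at t)" by (auto intro!: derivative_eq_intros)
  then have "(h has_real_derivative a) (at t)"
    by (rule has_field_derivative_transform_within_open) (use assms in auto)
  then show ?thesis by (rule DERIV_imp_deriv)
qed

text \<open>The extra points \<open>L - 1, L\<close> and \<open>R, R + 1\<close> lie in the affine ends and contribute the slopes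
  \<open>am\<close> and \<open>ap\<close>.\<close>

lemma list_variation_slopes_le:
  assumes bounded: "slope_var_bounded h C"
    and T: "0 \<le> T" "\<And>t. T \<le> t \<Longrightarrow> h t = ap * t + cp" "\<And>t. t \<le> - T \<Longrightarrow> h t = am * t + cm"
    and d: "0 < d" "d < 1" and ts: "sorted_wrt (\<lambda>x y. x + d < y) ts"
  shows "list_variation (map (\<lambda>t. slope h t (t + d)) ts) \<le> C - \<bar>am\<bar> - \<bar>ap\<bar>"
proof -
  define L where "L = Min (insert (- T) (set ts)) - 1"
  define R where "R = Max (insert T (set ts)) + 1"
  have L_le: "L \<le> - T - 1" unfolding L_def by simp
  have L_less: "\<forall>x\<in>set ts. L < x"
  proof
    fix x
    assume "x \<in> set ts"
    then have "Min (insert (- T) (set ts)) \<le> x" by (intro Min_le) auto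
    then show "L < x" unfolding L_def by linarith
  qed
  have R_ge: "T + 1 \<le> R" unfolding R_def by simp
  have R_gt: "\<forall>x\<in>set ts. x + 1 \<le> R"
  proof
    fix x
    assume "x \<in> set ts"
    then have "x \<le> Max (insert T (set ts))" by (intro Max_ge) auto
    then show "x + 1 \<le> R" unfolding R_def by linarith
  qed
  have "h (L - 1) = am * (L - 1) + cm" "h L = am * L + cm" using L_le T(3) by auto
  then have slope_L: "slope h (L - 1) L = am" by (simp add: slope_def algebra_simps)
  have "h R = ap * R + cp" "h (R + 1) = ap * (R + 1) + cp" using R_ge T(2) by auto
  then have slope_R: "slope h R (R + 1) = ap" by (simp add: slope_def algebra_simps)
  let ?P = "L # shift_pairs d ts @ [R, R + 1]"
  have "sorted_wrt (<) ((L - 1) # ?P)"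
    using sorted_shift_pairs[OF d(1) ts] L_le L_less R_ge R_gt d T(1)
    by (auto simp: sorted_wrt_append set_shift_pairs)
  then have "slope_var h 0 ((L - 1) # ?P) \<le> C"
    using bounded unfolding slope_var_bounded_def by blast
  moreover have "slope_var h 0 ((L - 1) # ?P) = \<bar>am\<bar> + slope_var h am ?P" using slope_L by simp
  moreover have "list_variation (am # map (\<lambda>t. slope h t (t + d)) ts) + \<bar>ap\<bar> \<le> slope_var h am ?P"
    by (rule list_variation_short_slopes_le[OF slope_R])
  moreover have "list_variation (map (\<lambda>t. slope h t (t + d)) ts)
      \<le> list_variation (am # map (\<lambda>t. slope h t (t + d)) ts)"
    by (rule list_variation_Cons_ge)
  ultimately show ?thesis by linarith
qed

lemma list_variation_deriv_le:
  assumes bounded: "slope_var_bounded h C"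
    and T: "0 \<le> T" "\<And>t. T \<le> t \<Longrightarrow> h t = ap * t + cp" "\<And>t. t \<le> - T \<Longrightarrow> h t = am * t + cm"
    and ts: "sorted_wrt (<) ts" "set ts \<subseteq> {t. h differentiable (at t)}"
  shows "list_variation (map (deriv h) ts) \<le> C - \<bar>am\<bar> - \<bar>ap\<bar>"
proof (rule tendsto_upperbound)
  show "((\<lambda>d. list_variation (map (\<lambda>t. slope h t (t + d)) ts)) \<longlongrightarrow> list_variation (map (deriv h) ts))
      (at_right 0)"
  proof (rule tendsto_list_variation)
    fix t
    assume "t \<in> set ts"
    with ts(2) have "(h has_real_derivative deriv h t) (at t)"
      by (auto simp: DERIV_deriv_iff_real_differentiable)
    then have "((\<lambda>d. (h (t + d) - h t) / d) \<longlongrightarrow> deriv h t) (at 0)" by (rule DERIV_D)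
    then show "((\<lambda>d. slope h t (t + d)) \<longlongrightarrow> deriv h t) (at_right 0)"
      by (simp add: slope_def filterlim_at_split)
  qed
  have "eventually (\<lambda>d. d < 1) (at_right (0::real))"
    unfolding eventually_at_right_field by (intro exI[of _ 1]) auto
  with eventually_at_right_less[of 0] eventually_sorted_gap[OF ts(1)]
  show "eventually (\<lambda>d. list_variation (map (\<lambda>t. slope h t (t + d)) ts) \<le> C - \<bar>am\<bar> - \<bar>ap\<bar>)
      (at_right 0)"
    by eventually_elim (rule list_variation_slopes_le[OF bounded T])
qed simp

lemma intrinsic_var_deriv_le:
  assumes "tame h C"
  shows "intrinsic_var_deriv h \<le> ereal C"
proof -
  from assms obtain ap cp Tp where top: "\<And>t. Tp \<le> t \<Longrightarrow> h t = ap * t + cp"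
    unfolding tame_def eventually_affine_def eventually_at_top_linorder by blast
  from assms obtain am cm Tm where bot: "\<And>t. t \<le> Tm \<Longrightarrow> h t = am * t + cm"
    unfolding tame_def eventually_affine_def eventually_at_bot_linorder by blast
  define T where "T = max 0 (max Tp (- Tm))"
  have T: "0 \<le> T" "\<And>t. T \<le> t \<Longrightarrow> h t = ap * t + cp" "\<And>t. t \<le> - T \<Longrightarrow> h t = am * t + cm"
    using top bot unfolding T_def by auto
  have "deriv h t = ap" if "T < t" for t
    by (rule deriv_eq_affine_on_open[of "{T<..}"]) (use that T in auto)
  then have Lim_top: "Lim at_top (deriv h) = ap"
    by (intro tendsto_Lim tendsto_eventually) (auto intro: eventually_mono[OF eventually_gt_at_top[of T]])
  have "deriv h t = am" if "t < - T" for t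
    by (rule deriv_eq_affine_on_open[of "{..< - T}"]) (use that T in auto)
  then have Lim_bot: "Lim at_bot (deriv h) = am"
    by (intro tendsto_Lim tendsto_eventually) (auto intro: eventually_mono[OF eventually_gt_at_bot[of "- T"]])
  have "total_variation_on {t. h differentiable (at t)} (deriv h) \<le> ereal (C - \<bar>am\<bar> - \<bar>ap\<bar>)"
    unfolding total_variation_on_def sum_eq_list_variation
    using list_variation_deriv_le[OF _ T] assms by (auto intro!: SUP_least simp: tame_def)
  then have "intrinsic_var_deriv h \<le> ereal (C - \<bar>am\<bar> - \<bar>ap\<bar>) + ereal \<bar>ap\<bar> + ereal \<bar>am\<bar>"
    unfolding intrinsic_var_deriv_def Lim_top Lim_bot by (intro add_right_mono)
  then show ?thesis by simp
qed

theorem theorem1: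
  fixes k :: real and n :: nat and dims :: "nat \<Rightarrow> nat"
    and W :: "nat \<Rightarrow> nat \<Rightarrow> nat \<Rightarrow> real" and b :: "nat \<Rightarrow> nat \<Rightarrow> real"
    and w0 :: "nat \<Rightarrow> real" and b0 :: "nat \<Rightarrow> real"
  assumes "k > 0"
    and "n \<ge> 2"
    and "dims n = 1"
    and "(\<Prod>i=1..n. mat_norm_inf (dims i) (dims (i - 1)) (W i)) \<le> k"
    and "mat_norm_inf (dims 0) 1 (\<lambda>i j. w0 i) = 1"
  shows "intrinsic_var_deriv (\<lambda>t. net dims W b n (\<lambda>i. w0 i * t + b0 i)) \<le> ereal (2 * k)"
proof -
  have w0: "\<bar>w0 c\<bar> \<le> 1" if "c < dims 0" for c
    using row_sum_le_mat_norm_inf[OF that, where nc = 1 and W = "\<lambda>i j. w0 i"] assms(5) by simp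
  have "tame (\<lambda>t. net dims W b n (\<lambda>i. w0 i * t + b0 i))
      (2 * (\<Prod>i=1..n. mat_norm_inf (dims i) (dims (i - 1)) (W i)))"
    unfolding net_def by (rule tame_net_layers) (use w0 assms(2,3) in auto)
  then have "tame (\<lambda>t. net dims W b n (\<lambda>i. w0 i * t + b0 i)) (2 * k)"
    by (rule tame_mono) (use assms(4) in simp)
  then show ?thesis by (rule intrinsic_var_deriv_le)
qed

end
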